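(* Every transformer with average hard attention (AHA), as defined in the context, can be simulated by $\mathbf{PFO}^2$: each map $\bar w\mapsto H^{(\ell)}(\bar w)$ and the output map $\bar w\mapsto o(\bar w)$ is simulated by $\mathbf{PFO}^2$ over $\bar\Sigma$.
   Context: Fixed precision: $\mathbb{F}$ is a fixed finite set of floating-point values containing $0,1,-1,\infty,-\infty$; every arithmetic operation used below returns a value in $\mathbb{F}$, with conventions $\infty+f=\infty$, $-\infty+f=-\infty$ for $f\ne\mp\infty$; $f\cdot(\pm\infty)=\pm\infty$ for $f>0$ and $=\mp\infty$ for $f<0$; $f/\infty=0$ for finite $f$; $\exp(\infty)=\infty$, $\exp(-\infty)=0$. Under fixed precision the attention weights at any position have at most $N_{\max}=\lfloor \min(1,\max(\mathbb{F}\setminus\{\infty\}))/\min(\mathbb{F}_{>0})\rfloor$ nonzero entries, and a sum of nonnegative elements of $\mathbb{F}$ is determined by how many summands take each value, counted up to a fixed threshold. Given a finite alphabet $\Sigma$ and fresh $\mathrm{EOS}\notin\Sigma$, $\bar\Sigma=\Sigma\cup\{\mathrm{EOS}\}$ and $\bar w=w_1\cdots w_Nw_{N+1}$ with $w_{N+1}=\mathrm{EOS}$. A transformer of width $D$ and depth $L$ (parameters in $\mathbb{F}$) computes $H^{(\ell)}(\bar w)\in\mathbb{F}^{D\times(N+1)}$, $\ell\in\{0,0.5,\dots,L\}$: $H^{(0)}_{:,n}=e(w_n)$; $H^{(\ell+0.5)}=\mathrm{LN}(A^{(\ell)}(H^{(\ell)})+H^{(\ell)})$, $H^{(\ell+1)}=\mathrm{LN}(F^{(\ell)}(H^{(\ell+0.5)})+H^{(\ell+0.5)})$,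 with $\mathrm{LN}$ columnwise layer normalization, $F^{(\ell)}(H)_{:,n}=W^{F2}\mathrm{ReLU}(W^{F1}H_{:,n}+b^{F1})+b^{F2}$, $Q=W^QH,K=W^KH,V=W^VH$, $S_{n,m}=Q_{:,n}\cdot K_{:,m}/\sqrt D$, $A(H)_{:,n}=\sum_{m<n}\alpha_{n,m}V_{:,m}$, and output $o(\bar w)=\theta^\top H^{(L)}_{:,N+1}+b$. With average hard attention the weights are $\alpha_{n,m}=\mathbf{1}[S_{n,m}=\max_{i<n}S_{n,i}]\,/\,\sum_{j<n}\mathbf{1}[S_{n,j}=\max_{i<n}S_{n,i}]$ for $m<n$. $\mathbf{PFO}^2$ over $\Gamma$: formulas in the two variables $x,y$ (re-quantifiable), atomic formulas $\pi_a(z)$ ($a\in\Gamma$) and $z<z'$, closed under $\wedge,\neg$, $\exists y<x:\phi(x,y)$, $\exists x<y:\phi(x,y)$, and, for $\phi(x)$ with only free variable $x$, $\exists x<y:\phi(x)$ and $\exists x:\phi(x)$ (symmetrically in $x,y$); standard semantics. A map $G$ assigning to each $\bar w$ a matrix $G(\bar w)\in\mathbb{F}^{D\times(N+1)}$ is simulated by $\mathbf{PFO}^2$ if for every $d$ and $f\in\mathbb{F}$ there is a $\mathbf{PFO}^2$ formula $\phi(x)$ over $\bar\Sigma$ with one free variable such that for all $w$ and $n\in\{1,\dots,N+1\}$: $G_{d,n}(\bar w)=f$ iff $\bar w,n\models\phi(x)$ (for the scalar $o$, take $n=N+1$). *)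

theory Defs
  imports "HOL-Analysis.Analysis" "HOL-Library.Extended_Real"
begin

text \<open>Every arithmetic operation is an arbitrary (rounding) function whose
results lie in F, subject to the conventions for infinities stated in the paper.
Multi-term sums are computed by an abstract summation operation fsum on lists
(in the given order), again with values in F.\<close>

record fparith =
  Fset   :: "ereal set"
  fadd   :: "ereal \<Rightarrow> ereal \<Rightarrow> ereal"
  fsub   :: "ereal \<Rightarrow> ereal \<Rightarrow> ereal"
  fmul   :: "ereal \<Rightarrow> ereal \<Rightarrow> ereal"
  fdiv   :: "ereal \<Rightarrow> ereal \<Rightarrow> ereal"
  fsqrt  :: "ereal \<Rightarrow> ereal"
  fexp   :: "ereal \<Rightarrow> ereal"
  fsum   :: "ereal list \<Rightarrow> ereal"
  fconst :: "real \<Rightarrow> ereal"   \<comment> \<open>representation in F of a real constant (e.g. D, sqrt D)\<close>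

definition Nmax :: "fparith \<Rightarrow> nat" where
  "Nmax A = nat \<lfloor>real_of_ereal (min 1 (Max (Fset A - {\<infinity>})))
                 / real_of_ereal (Min {f \<in> Fset A. f > 0})\<rfloor>"

definition fixed_precision :: "fparith \<Rightarrow> bool" where
  "fixed_precision A \<longleftrightarrow>
     finite (Fset A) \<and> {0, 1, -1, \<infinity>, -\<infinity>} \<subseteq> Fset A
     \<comment> \<open>every operation returns a value in F\<close>
   \<and> (\<forall>x y. fadd A x y \<in> Fset A \<and> fsub A x y \<in> Fset A \<and> fmul A x y \<in> Fset A \<and> fdiv A x y \<in> Fset A)
   \<and> (\<forall>x. fsqrt A x \<in> Fset A \<and> fexp A x \<in> Fset A)
   \<and> (\<forall>xs. fsum A xs \<in> Fset A) \<and> (\<forall>r. fconst A r \<in> Fset A)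
     \<comment> \<open>conventions for infinities\<close>
   \<and> (\<forall>f\<in>Fset A. f \<noteq> -\<infinity> \<longrightarrow> fadd A \<infinity> f = \<infinity> \<and> fadd A f \<infinity> = \<infinity>)
   \<and> (\<forall>f\<in>Fset A. f \<noteq> \<infinity> \<longrightarrow> fadd A (-\<infinity>) f = -\<infinity> \<and> fadd A f (-\<infinity>) = -\<infinity>)
   \<and> (\<forall>f\<in>Fset A. f > 0 \<longrightarrow> fmul A f \<infinity> = \<infinity> \<and> fmul A \<infinity> f = \<infinity>
                         \<and> fmul A f (-\<infinity>) = -\<infinity> \<and> fmul A (-\<infinity>) f = -\<infinity>)
   \<and> (\<forall>f\<in>Fset A. f < 0 \<longrightarrow> fmul A f \<infinity> = -\<infinity> \<and> fmul A \<infinity> f = -\<infinity>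
                         \<and> fmul A f (-\<infinity>) = \<infinity> \<and> fmul A (-\<infinity>) f = \<infinity>)
   \<and> (\<forall>f\<in>Fset A. \<bar>f\<bar> \<noteq> \<infinity> \<longrightarrow> fdiv A f \<infinity> = 0)
   \<and> fexp A \<infinity> = \<infinity> \<and> fexp A (-\<infinity>) = 0
     \<comment> \<open>average-hard-attention weights (1[tied]/#tied) have at most Nmax nonzero entries\<close>
   \<and> (\<forall>xs. set xs \<subseteq> {0, 1} \<longrightarrow>
        card {j. j < length xs \<and> (if xs ! j = 1 then fdiv A 1 (fsum A xs) else 0) \<noteq> 0} \<le> Nmax A)
     \<comment> \<open>a sum of nonnegative elements of F is determined by the value counts up to a threshold\<close>
   \<and> (\<exists>\<tau>::nat. \<forall>xs ys. (\<forall>v\<in>set xs. v \<in> Fset A \<and> v \<ge> 0) \<longrightarrow> (\<forall>v\<in>set ys. v \<in> Fset A \<and> v \<ge> 0)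
        \<longrightarrow> (\<forall>v. min (count_list xs v) \<tau> = min (count_list ys v) \<tau>) \<longrightarrow> fsum A xs = fsum A ys)"

definition vsum :: "fparith \<Rightarrow> ereal list \<Rightarrow> ereal" where
  "vsum A xs = (if xs = [] then 0 else fsum A xs)"

definition dotp :: "fparith \<Rightarrow> nat \<Rightarrow> (nat \<Rightarrow> ereal) \<Rightarrow> (nat \<Rightarrow> ereal) \<Rightarrow> ereal" where
  "dotp A n x y = vsum A (map (\<lambda>j. fmul A (x j) (y j)) [0..<n])"

definition matvec :: "fparith \<Rightarrow> nat \<Rightarrow> (nat \<Rightarrow> nat \<Rightarrow> ereal) \<Rightarrow> (nat \<Rightarrow> ereal) \<Rightarrow> nat \<Rightarrow> ereal" where
  "matvec A n W x i = dotp A n (W i) x"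

definition layernorm :: "fparith \<Rightarrow> nat \<Rightarrow> (nat \<Rightarrow> ereal) \<Rightarrow> nat \<Rightarrow> ereal" where
  "layernorm A D x =
     (let \<mu> = fdiv A (vsum A (map x [0..<D])) (fconst A (real D));
          c = (\<lambda>d. fsub A (x d) \<mu>);
          \<sigma>2 = fdiv A (vsum A (map (\<lambda>d. fmul A (c d) (c d)) [0..<D])) (fconst A (real D))
      in (\<lambda>d. fdiv A (c d) (fsqrt A \<sigma>2)))"

record tlayer =
  WQ  :: "nat \<Rightarrow> nat \<Rightarrow> ereal"
  WK  :: "nat \<Rightarrow> nat \<Rightarrow> ereal"
  WV  :: "nat \<Rightarrow> nat \<Rightarrow> ereal"
  Dff :: nat
  WF1 :: "nat \<Rightarrow> nat \<Rightarrow> ereal"       \<comment> \<open>Dff x D\<close>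
  bF1 :: "nat \<Rightarrow> ereal"
  WF2 :: "nat \<Rightarrow> nat \<Rightarrow> ereal"       \<comment> \<open>D x Dff\<close>
  bF2 :: "nat \<Rightarrow> ereal"

record 'a transformer =
  width  :: nat
  depth  :: nat
  emb    :: "'a option \<Rightarrow> nat \<Rightarrow> ereal"  \<comment> \<open>e; None plays the role of EOS\<close>
  layers :: "nat \<Rightarrow> tlayer"
  theta  :: "nat \<Rightarrow> ereal"
  bout   :: ereal

definition wf_transformer :: "fparith \<Rightarrow> 'a transformer \<Rightarrow> bool" where
  "wf_transformer A T \<longleftrightarrow>
     (let D = width T; F = Fset A in
       D > 0
     \<and> (\<forall>s. \<forall>d<D. emb T s d \<in> F)
     \<and> (\<forall>d<D. theta T d \<in> F) \<and> bout T \<in> F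
     \<and> (\<forall>l<depth T. let P = layers T l in
           (\<forall>i<D. \<forall>j<D. WQ P i j \<in> F \<and> WK P i j \<in> F \<and> WV P i j \<in> F)
         \<and> (\<forall>i<Dff P. \<forall>j<D. WF1 P i j \<in> F \<and> WF2 P j i \<in> F)
         \<and> (\<forall>i<Dff P. bF1 P i \<in> F) \<and> (\<forall>j<D. bF2 P j \<in> F)))"

definition wbar :: "'a list \<Rightarrow> 'a option list" where
  "wbar w = map Some w @ [None]"

text \<open>Columns are indexed 0..N (paper positions 1..N+1).  H n is the n-th column.\<close>
type_synonym hmat = "nat \<Rightarrow> nat \<Rightarrow> ereal"

definition aha_attention :: "fparith \<Rightarrow> nat \<Rightarrow> tlayer \<Rightarrow> hmat \<Rightarrow> hmat" where
  "aha_attention A D P H =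
     (let Q = (\<lambda>n. matvec A D (WQ P) (H n));
          K = (\<lambda>n. matvec A D (WK P) (H n));
          V = (\<lambda>n. matvec A D (WV P) (H n));
          S = (\<lambda>n m. fdiv A (dotp A D (Q n) (K m)) (fconst A (sqrt (real D))));
          tied = (\<lambda>n m. S n m = Max ((S n) ` {..<n}));
          ind = (\<lambda>n m. if tied n m then (1::ereal) else 0);
          \<alpha> = (\<lambda>n m. if tied n m then fdiv A 1 (fsum A (map (ind n) [0..<n])) else 0)
      in (\<lambda>n d. vsum A (map (\<lambda>m. fmul A (\<alpha> n m) (V m d))
                              (filter (\<lambda>m. \<alpha> n m \<noteq> 0) [0..<n]))))"

definition ffn :: "fparith \<Rightarrow> nat \<Rightarrow> tlayer \<Rightarrow> (nat \<Rightarrow> ereal) \<Rightarrow> nat \<Rightarrow> ereal" where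
  "ffn A D P h =
     (let z = (\<lambda>i. max 0 (fadd A (matvec A D (WF1 P) h i) (bF1 P i)))
      in (\<lambda>d. fadd A (matvec A (Dff P) (WF2 P) z d) (bF2 P d)))"

text \<open>hidden A T w k is H^(k/2)(wbar w), as a function column index n, row index d.\<close>
fun hidden :: "fparith \<Rightarrow> 'a transformer \<Rightarrow> 'a list \<Rightarrow> nat \<Rightarrow> hmat" where
  "hidden A T w 0 = (\<lambda>n d. emb T (wbar w ! n) d)"
| "hidden A T w (Suc k) =
     (let D = width T; P = layers T (k div 2); H = hidden A T w k in
      if even k then
        (let Att = aha_attention A D P H in
         (\<lambda>n. layernorm A D (\<lambda>d. fadd A (Att n d) (H n d))))
      else
        (\<lambda>n. layernorm A D (\<lambda>d. fadd A (ffn A D P (H n) d) (H n d))))"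

definition tf_output :: "fparith \<Rightarrow> 'a transformer \<Rightarrow> 'a list \<Rightarrow> ereal" where
  "tf_output A T w = fadd A (dotp A (width T) (theta T) (hidden A T w (2 * depth T) (length w))) (bout T)"

datatype var = VX | VY

fun other :: "var \<Rightarrow> var" where
  "other VX = VY" | "other VY = VX"

datatype 'g pfo =
    Sym 'g var
  | Lt var var
  | Conj "'g pfo" "'g pfo"
  | Neg "'g pfo"
  | ExLt var "'g pfo"
  | ExAll var "'g pfo"

fun fv :: "'g pfo \<Rightarrow> var set" where
  "fv (Sym a v) = {v}"
| "fv (Lt u v) = {u, v}"
| "fv (Conj \<phi> \<psi>) = fv \<phi> \<union> fv \<psi>"
| "fv (Neg \<phi>) = fv \<phi>"
| "fv (ExLt v \<phi>) = (fv \<phi> - {v}) \<union> {other v}"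
| "fv (ExAll v \<phi>) = fv \<phi> - {v}"

fun is_pfo2 :: "'g pfo \<Rightarrow> bool" where
  "is_pfo2 (Sym a v) = True"
| "is_pfo2 (Lt u v) = True"
| "is_pfo2 (Conj \<phi> \<psi>) = (is_pfo2 \<phi> \<and> is_pfo2 \<psi>)"
| "is_pfo2 (Neg \<phi>) = is_pfo2 \<phi>"
| "is_pfo2 (ExLt v \<phi>) = is_pfo2 \<phi>"
| "is_pfo2 (ExAll v \<phi>) = (is_pfo2 \<phi> \<and> fv \<phi> \<subseteq> {v})"

fun sat :: "'g list \<Rightarrow> (var \<Rightarrow> nat) \<Rightarrow> 'g pfo \<Rightarrow> bool" where
  "sat w s (Sym a v) = (s v < length w \<and> w ! s v = a)"
| "sat w s (Lt u v) = (s u < s v)"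
| "sat w s (Conj \<phi> \<psi>) = (sat w s \<phi> \<and> sat w s \<psi>)"
| "sat w s (Neg \<phi>) = (\<not> sat w s \<phi>)"
| "sat w s (ExLt v \<phi>) = (\<exists>i < s (other v). sat w (s(v := i)) \<phi>)"
| "sat w s (ExAll v \<phi>) = (\<exists>i < length w. sat w (s(v := i)) \<phi>)"

text \<open>w, n |= \<phi>(x)  (positions 0-based).\<close>
definition models_at :: "'g list \<Rightarrow> nat \<Rightarrow> 'g pfo \<Rightarrow> bool" where
  "models_at w n \<phi> = sat w (\<lambda>_. n) \<phi>"

definition simulated_PFO2 :: "ereal set \<Rightarrow> nat \<Rightarrow> ('a list \<Rightarrow> hmat) \<Rightarrow> bool" where
  "simulated_PFO2 F D G \<longleftrightarrow>
     (\<forall>d<D. \<forall>f\<in>F. \<exists>\<phi> :: 'a option pfo. is_pfo2 \<phi> \<and> fv \<phi> \<subseteq> {VX} \<and>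
        (\<forall>w. \<forall>n \<le> length w. G w n d = f \<longleftrightarrow> models_at (wbar w) n \<phi>))"

definition simulated_PFO2_scalar :: "ereal set \<Rightarrow> ('a list \<Rightarrow> ereal) \<Rightarrow> bool" where
  "simulated_PFO2_scalar F g \<longleftrightarrow>
     (\<forall>f\<in>F. \<exists>\<phi> :: 'a option pfo. is_pfo2 \<phi> \<and> fv \<phi> \<subseteq> {VX} \<and>
        (\<forall>w. g w = f \<longleftrightarrow> models_at (wbar w) (length w) \<phi>))"

end

theory Submission
  imports Defs
begin

(* Every column of every H^(l) takes only finitely many values, each of which is defined at
   position x by a PFO^2 formula; this is proved sublayer by sublayer.  Embedding columns depend
   only on the letter and feed-forward sublayers act columnwise.  At attention position n the
   tied positions are the m < n whose column has maximal score against column n, the maximum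
   ranging over the set of earlier columns.  The normaliser is a fixed-precision sum of a 0/1
   list, hence determined by the numbers of tied and untied positions capped at the threshold,
   and when the common weight is nonzero at most Nmax positions are tied.  So the attention
   output is a function of the own column, the set of earlier columns, two capped counts and the
   short list of tied columns, all definable with the past quantifier alone.  Only finiteness of
   the value sets matters, so the parameters need not lie in F. *)

fun swap_vars :: "'g pfo \<Rightarrow> 'g pfo" where
  "swap_vars (Sym a v) = Sym a (other v)"
| "swap_vars (Lt u v) = Lt (other u) (other v)"
| "swap_vars (Conj \<phi> \<psi>) = Conj (swap_vars \<phi>) (swap_vars \<psi>)"
| "swap_vars (Neg \<phi>) = Neg (swap_vars \<phi>)"
| "swap_vars (ExLt v \<phi>) = ExLt (other v) (swap_vars \<phi>)"
| "swap_vars (ExAll v \<phi>) = ExAll (other v) (swap_vars \<phi>)"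

lemma other_other [simp]: "other (other v) = v"
  by (cases v) auto

lemma other_eq_iff [simp]: "other u = other v \<longleftrightarrow> u = v"
  by (cases u; cases v) auto

lemma fv_swap_vars: "fv (swap_vars \<phi>) = other ` fv \<phi>"
  by (induction \<phi>) (auto simp: image_Un image_set_diff inj_def)

lemma is_pfo2_swap_vars: "is_pfo2 (swap_vars \<phi>) \<longleftrightarrow> is_pfo2 \<phi>"
proof (induction \<phi>)
  case (ExAll v \<phi>)
  have "other ` fv \<phi> \<subseteq> {other v} \<longleftrightarrow> fv \<phi> \<subseteq> {v}" by auto
  then show ?case using ExAll by (simp add: fv_swap_vars)
qed auto

lemma sat_swap_vars: "sat w s (swap_vars \<phi>) \<longleftrightarrow> sat w (s \<circ> other) \<phi>"
proof -
  have upd: "(s(other v := i)) \<circ> other = (s \<circ> other)(v := i)" for s :: "var \<Rightarrow> nat" and v i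
    by (rule ext) (auto simp: fun_upd_def)
  show ?thesis by (induction \<phi> arbitrary: s) (simp_all add: upd)
qed

lemma sat_cong_fv: "\<forall>v\<in>fv \<phi>. s v = s' v \<Longrightarrow> sat w s \<phi> \<longleftrightarrow> sat w s' \<phi>"
proof (induction \<phi> arbitrary: s s')
  case (Conj \<phi> \<psi>)
  have "sat w s \<phi> \<longleftrightarrow> sat w s' \<phi>" using Conj.prems by (intro Conj.IH(1)) auto
  moreover have "sat w s \<psi> \<longleftrightarrow> sat w s' \<psi>" using Conj.prems by (intro Conj.IH(2)) auto
  ultimately show ?case by simp
next
  case (ExLt v \<phi>)
  have "sat w (s(v := i)) \<phi> \<longleftrightarrow> sat w (s'(v := i)) \<phi>" for i
    using ExLt.prems by (intro ExLt.IH) auto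
  moreover have "s (other v) = s' (other v)" using ExLt.prems by auto
  ultimately show ?case by simp
next
  case (ExAll v \<phi>)
  have "sat w (s(v := i)) \<phi> \<longleftrightarrow> sat w (s'(v := i)) \<phi>" for i
    using ExAll.prems by (intro ExAll.IH) auto
  then show ?case by simp
qed auto

definition definable :: "('a list \<Rightarrow> nat \<Rightarrow> bool) \<Rightarrow> bool" where
  "definable P \<longleftrightarrow> (\<exists>\<phi> :: 'a option pfo. is_pfo2 \<phi> \<and> fv \<phi> \<subseteq> {VX} \<and>
      (\<forall>w n. n \<le> length w \<longrightarrow> (P w n \<longleftrightarrow> models_at (wbar w) n \<phi>)))"

lemma definable_cong:
  "definable P \<Longrightarrow> (\<And>w n. n \<le> length w \<Longrightarrow> P w n \<longleftrightarrow> Q w n) \<Longrightarrow> definable Q"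
  unfolding definable_def by metis

lemma definable_const: "definable (\<lambda>w n. b)"
  unfolding definable_def
  by (rule exI[of _ "if b then Neg (Lt VX VX) else Lt VX VX"]) (simp add: models_at_def)

lemma definable_conj: "definable P \<Longrightarrow> definable Q \<Longrightarrow> definable (\<lambda>w n. P w n \<and> Q w n)"
  unfolding definable_def
  by (elim exE conjE, rename_tac \<phi> \<psi>, rule_tac x = "Conj \<phi> \<psi>" in exI) (simp add: models_at_def)

lemma definable_neg: "definable P \<Longrightarrow> definable (\<lambda>w n. \<not> P w n)"
  unfolding definable_def
  by (elim exE conjE, rename_tac \<phi>, rule_tac x = "Neg \<phi>" in exI) (simp add: models_at_def)

lemma definable_disj: "definable P \<Longrightarrow> definable Q \<Longrightarrow> definable (\<lambda>w n. P w n \<or> Q w n)"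
  using definable_neg[OF definable_conj[OF definable_neg definable_neg]] by simp

lemma definable_imp: "definable P \<Longrightarrow> definable Q \<Longrightarrow> definable (\<lambda>w n. P w n \<longrightarrow> Q w n)"
  using definable_disj[OF definable_neg] by simp

lemma definable_bex:
  "finite S \<Longrightarrow> (\<And>s. s \<in> S \<Longrightarrow> definable (P s)) \<Longrightarrow> definable (\<lambda>w n. \<exists>s\<in>S. P s w n)"
proof (induction S rule: finite_induct)
  case empty
  show ?case using definable_const[of False] by simp
next
  case (insert s S)
  have "definable (\<lambda>w n. P s w n \<or> (\<exists>s\<in>S. P s w n))"
    using insert by (intro definable_disj) auto
  then show ?case by simp
qed

lemma definable_ball:
  "finite S \<Longrightarrow> (\<And>s. s \<in> S \<Longrightarrow> definable (P s)) \<Longrightarrow> definable (\<lambda>w n. \<forall>s\<in>S. P s w n)"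
proof -
  assume "finite S" "\<And>s. s \<in> S \<Longrightarrow> definable (P s)"
  then have "definable (\<lambda>w n. \<not> (\<exists>s\<in>S. \<not> P s w n))"
    by (intro definable_neg definable_bex) auto
  then show ?thesis by simp
qed

lemma definable_letter: "definable (\<lambda>w n. wbar w ! n = a)"
  unfolding definable_def
  by (rule exI[of _ "Sym a VX"]) (auto simp: models_at_def wbar_def)

(* \<exists>m<n. Q m is expressed as \<exists>y<x. \<phi>(y), with \<phi>(y) obtained by renaming x and y in \<phi>(x). *)
lemma definable_ex_before: "definable Q \<Longrightarrow> definable (\<lambda>w n. \<exists>m<n. Q w m)"
  unfolding definable_def
proof (elim exE conjE)
  fix \<phi> :: "'a option pfo"
  assume \<phi>: "is_pfo2 \<phi>" "fv \<phi> \<subseteq> {VX}"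
    and Q: "\<forall>w n. n \<le> length w \<longrightarrow> Q w n = models_at (wbar w) n \<phi>"
  show "\<exists>\<psi>. is_pfo2 \<psi> \<and> fv \<psi> \<subseteq> {VX} \<and>
      (\<forall>w n. n \<le> length w \<longrightarrow> (\<exists>m<n. Q w m) = models_at (wbar w) n \<psi>)"
  proof (rule exI[of _ "ExLt VY (swap_vars \<phi>)"], intro conjI allI impI)
    show "is_pfo2 (ExLt VY (swap_vars \<phi>))" using \<phi> by (simp add: is_pfo2_swap_vars)
    show "fv (ExLt VY (swap_vars \<phi>)) \<subseteq> {VX}" using \<phi> by (auto simp: fv_swap_vars)
    fix w :: "'a list" and n assume "n \<le> length w"
    moreover have "sat (wbar w) (((\<lambda>_. n)(VY := m)) \<circ> other) \<phi> \<longleftrightarrow> sat (wbar w) (\<lambda>_. m) \<phi>" for m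
      using \<phi>(2) by (intro sat_cong_fv) auto
    ultimately show "(\<exists>m<n. Q w m) = models_at (wbar w) n (ExLt VY (swap_vars \<phi>))"
      using Q by (auto simp: models_at_def sat_swap_vars)
  qed
qed

lemma card_before_ge_Suc_iff:
  "Suc k \<le> card {j. j < (n::nat) \<and> U j} \<longleftrightarrow> (\<exists>m<n. U m \<and> k \<le> card {j. j < m \<and> U j})"
proof
  assume k: "Suc k \<le> card {j. j < n \<and> U j}"
  let ?X = "{j. j < n \<and> U j}"
  have fin: "finite ?X" by (rule finite_subset[of _ "{..<n}"]) auto
  have "?X \<noteq> {}" using k by (metis card.empty not_less_eq_eq zero_le)
  with fin have m: "Max ?X \<in> ?X" by (rule Max_in)
  have "{j. j < Max ?X \<and> U j} = ?X - {Max ?X}"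
    using m Max_ge[OF fin] by fastforce
  then have "card {j. j < Max ?X \<and> U j} = card ?X - 1" using m fin by simp
  then show "\<exists>m<n. U m \<and> k \<le> card {j. j < m \<and> U j}" using m k by auto
next
  assume "\<exists>m<n. U m \<and> k \<le> card {j. j < m \<and> U j}"
  then obtain m where m: "m < n" "U m" "k \<le> card {j. j < m \<and> U j}" by blast
  have "insert m {j. j < m \<and> U j} \<subseteq> {j. j < n \<and> U j}" using m by auto
  then have "card (insert m {j. j < m \<and> U j}) \<le> card {j. j < n \<and> U j}"
    by (intro card_mono) auto
  then show "Suc k \<le> card {j. j < n \<and> U j}" using m by simp
qed

lemma definable_card_before_ge: "definable U \<Longrightarrow> definable (\<lambda>w n. k \<le> card {j. j < n \<and> U w j})"
proof (induction k)
  case 0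
  show ?case using definable_const[of True] by simp
next
  case (Suc k)
  have "definable (\<lambda>w n. \<exists>m<n. U w m \<and> k \<le> card {j. j < m \<and> U w j})"
    using Suc by (intro definable_ex_before definable_conj)
  then show ?case by (rule definable_cong) (simp add: card_before_ge_Suc_iff)
qed

lemma definable_card_before_eq: "definable U \<Longrightarrow> definable (\<lambda>w n. card {j. j < n \<and> U w j} = k)"
proof -
  assume U: "definable U"
  have "definable (\<lambda>w n. k \<le> card {j. j < n \<and> U w j} \<and> \<not> Suc k \<le> card {j. j < n \<and> U w j})"
    using U by (intro definable_conj definable_neg definable_card_before_ge)
  then show ?thesis by (rule definable_cong) auto
qed

definition definable_fun :: "('a list \<Rightarrow> nat \<Rightarrow> 'b) \<Rightarrow> bool" where
  "definable_fun F \<longleftrightarrow> (\<exists>S. finite S \<and> (\<forall>w n. n \<le> length w \<longrightarrow> F w n \<in> S))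
                       \<and> (\<forall>b. definable (\<lambda>w n. F w n = b))"

lemma definable_fun_comp:
  assumes "definable_fun F"
  shows "definable_fun (\<lambda>w n. h (F w n))"
proof -
  obtain S where S: "finite S" "\<And>w n. n \<le> length w \<Longrightarrow> F w n \<in> S"
    and F: "\<And>b. definable (\<lambda>w n. F w n = b)"
    using assms unfolding definable_fun_def by blast
  have "definable (\<lambda>w n. h (F w n) = c)" for c
  proof -
    have "definable (\<lambda>w n. \<exists>s\<in>{s\<in>S. h s = c}. F w n = s)"
      using S(1) F by (intro definable_bex) auto
    then show ?thesis by (rule definable_cong) (use S in auto)
  qed
  moreover have "finite (h ` S)" using S by simp
  ultimately show ?thesis unfolding definable_fun_def using S by blast
qed

lemma definable_of_definable_fun: "definable_fun F \<Longrightarrow> definable (\<lambda>w n. P (F w n))"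
proof -
  assume "definable_fun F"
  then have "definable (\<lambda>w n. P (F w n) = True)"
    using definable_fun_comp[of F P] unfolding definable_fun_def by blast
  then show ?thesis by simp
qed

lemma definable_fun_bind:
  assumes "definable_fun Z" and "\<And>z. definable_fun (G z)"
  shows "definable_fun (\<lambda>w n. G (Z w n) w n)"
proof -
  obtain S where S: "finite S" "\<And>w n. n \<le> length w \<Longrightarrow> Z w n \<in> S"
    and Z: "\<And>z. definable (\<lambda>w n. Z w n = z)"
    using assms(1) unfolding definable_fun_def by blast
  have "\<forall>z. \<exists>R. finite R \<and> (\<forall>w n. n \<le> length w \<longrightarrow> G z w n \<in> R)"
    using assms(2) unfolding definable_fun_def by blast
  then obtain R where R: "\<And>z. finite (R z)" "\<And>z w n. n \<le> length w \<Longrightarrow> G z w n \<in> R z"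
    by (auto dest!: choice)
  have G: "definable (\<lambda>w n. G z w n = b)" for z b
    using assms(2) unfolding definable_fun_def by blast
  have "definable (\<lambda>w n. G (Z w n) w n = b)" for b
  proof -
    have "definable (\<lambda>w n. \<exists>z\<in>S. Z w n = z \<and> G z w n = b)"
      using S(1) by (intro definable_bex definable_conj Z G)
    then show ?thesis by (rule definable_cong) (use S in auto)
  qed
  moreover have "finite (\<Union>z\<in>S. R z)" using S R by simp
  moreover have "G (Z w n) w n \<in> (\<Union>z\<in>S. R z)" if "n \<le> length w" for w n
    using S(2)[OF that] R(2)[OF that] by blast
  ultimately show ?thesis unfolding definable_fun_def by blast
qed

lemma definable_fun_pair:
  assumes "definable_fun F" and "definable_fun G"
  shows "definable_fun (\<lambda>w n. (F w n, G w n))"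
  using assms(1) by (rule definable_fun_bind) (rule definable_fun_comp[OF assms(2)])

lemma definable_fun_letter: "definable_fun (\<lambda>w n. wbar w ! n :: 'a::finite option)"
  unfolding definable_fun_def using definable_letter by (intro conjI exI[of _ UNIV]) auto

lemma definable_fun_image_before:
  assumes "definable_fun c"
  shows "definable_fun (\<lambda>w n. c w ` {..<n})"
proof -
  obtain S where S: "finite S" "\<And>w n. n \<le> length w \<Longrightarrow> c w n \<in> S"
    using assms unfolding definable_fun_def by blast
  have "definable (\<lambda>w n. c w ` {..<n} = M)" for M
  proof (cases "finite M")
    case True
    have "definable (\<lambda>w n. (\<forall>u\<in>M. \<exists>m<n. c w m = u) \<and> \<not> (\<exists>m<n. c w m \<notin> M))"
      using True by (intro definable_conj definable_ball definable_neg definable_ex_before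
          definable_of_definable_fun[OF assms])
    then show ?thesis by (rule definable_cong) auto
  next
    case False
    then have "c w ` {..<n} \<noteq> M" for w n by auto
    then show ?thesis using definable_const[of False] by simp
  qed
  moreover have "c w ` {..<n} \<in> Pow S" if "n \<le> length w" for w n using S that by auto
  ultimately show ?thesis unfolding definable_fun_def using S(1) by blast
qed

lemma definable_fun_card_before_min:
  "definable U \<Longrightarrow> definable_fun (\<lambda>w n. min (card {j. j < n \<and> U w j}) t)"
proof -
  assume U: "definable U"
  have "definable (\<lambda>w n. min (card {j. j < n \<and> U w j}) t = b)" for b
  proof -
    have "definable (\<lambda>w n. (b < t \<and> card {j. j < n \<and> U w j} = b) \<or> (b = t \<and> t \<le> card {j. j < n \<and> U w j}))"
      using U by (intro definable_disj definable_conj definable_const definable_card_before_ge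
          definable_card_before_eq)
    then show ?thesis by (rule definable_cong) auto
  qed
  then show ?thesis unfolding definable_fun_def by (intro conjI exI[of _ "{..t}"]) auto
qed

lemma length_filter_upt: "length (filter U [0..<n]) = card {j. j < n \<and> U j}"
proof -
  have "{i. i < n \<and> U ([0..<n] ! i)} = {j. j < n \<and> U j}" by auto
  then show ?thesis by (simp add: length_filter_conv_card)
qed

lemma filter_upt_split:
  assumes "m < n" and "U m"
  shows "filter U [0..<n] = filter U [0..<m] @ m # filter U [Suc m..<n]"
proof -
  have "[0..<n] = [0..<m] @ m # [Suc m..<n]"
    using assms(1) by (metis le0 less_imp_le_nat upt_add_eq_append upt_conv_Cons le_add_diff_inverse)
  then show ?thesis using assms(2) by simp
qed

lemma nth_filter_upt:
  assumes "i < length (filter U [0..<n])"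
  defines "m \<equiv> filter U [0..<n] ! i"
  shows "m < n" and "U m" and "card {j. j < m \<and> U j} = i"
proof -
  have "m \<in> set (filter U [0..<n])" unfolding m_def using assms(1) by (rule nth_mem)
  then show "m < n" and "U m" by auto
  then have "filter U [0..<n] ! card {j. j < m \<and> U j} = m"
    and "card {j. j < m \<and> U j} < length (filter U [0..<n])"
    by (simp_all add: filter_upt_split nth_append length_filter_upt[symmetric])
  then show "card {j. j < m \<and> U j} = i"
    using assms nth_eq_iff_index_eq[of "filter U [0..<n]"] by auto
qed

lemma map_filter_upt_eq_iff:
  "map c (filter U [0..<n]) = l \<longleftrightarrow>
   card {j. j < n \<and> U j} = length l \<and>
   (\<forall>m<n. U m \<longrightarrow> (\<exists>i<length l. card {j. j < m \<and> U j} = i \<and> c m = l ! i))"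
proof
  assume l: "map c (filter U [0..<n]) = l"
  show "card {j. j < n \<and> U j} = length l \<and>
    (\<forall>m<n. U m \<longrightarrow> (\<exists>i<length l. card {j. j < m \<and> U j} = i \<and> c m = l ! i))"
  proof (intro conjI allI impI)
    show "card {j. j < n \<and> U j} = length l" using l by (auto simp: length_filter_upt)
    fix m assume "m < n" "U m"
    then show "\<exists>i<length l. card {j. j < m \<and> U j} = i \<and> c m = l ! i"
      using l by (auto simp: filter_upt_split nth_append length_filter_upt[symmetric])
  qed
next
  assume r: "card {j. j < n \<and> U j} = length l \<and>
    (\<forall>m<n. U m \<longrightarrow> (\<exists>i<length l. card {j. j < m \<and> U j} = i \<and> c m = l ! i))"
  show "map c (filter U [0..<n]) = l"
  proof (rule nth_equalityI)
    show "length (map c (filter U [0..<n])) = length l" using r by (simp add: length_filter_upt)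
    fix i assume "i < length (map c (filter U [0..<n]))"
    then have i: "i < length (filter U [0..<n])" by simp
    with r nth_filter_upt[OF i] show "map c (filter U [0..<n]) ! i = l ! i" by auto
  qed
qed

lemma definable_map_filter_before_eq:
  assumes U: "definable U" and c: "definable_fun c"
  shows "definable (\<lambda>w n. map (c w) (filter (U w) [0..<n]) = l)"
proof -
  have "definable (\<lambda>w m. \<exists>i\<in>{..<length l}. card {j. j < m \<and> U w j} = i \<and> c w m = l ! i)"
    using U by (intro definable_bex definable_conj definable_card_before_eq
        definable_of_definable_fun[OF c]) auto
  then have "definable (\<lambda>w n. card {j. j < n \<and> U w j} = length l \<and>
      \<not> (\<exists>m<n. \<not> (U w m \<longrightarrow> (\<exists>i\<in>{..<length l}. card {j. j < m \<and> U w j} = i \<and> c w m = l ! i))))"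
    using U by (intro definable_conj definable_card_before_eq definable_neg definable_ex_before
        definable_imp)
  then show ?thesis by (rule definable_cong) (auto simp: map_filter_upt_eq_iff)
qed

lemma definable_fun_filter_before:
  assumes U: "definable U" and c: "definable_fun c"
  shows "definable_fun (\<lambda>w n. if card {j. j < n \<and> U w j} \<le> N
                              then map (c w) (filter (U w) [0..<n]) else [])"
    (is "definable_fun ?F")
proof -
  obtain S where S: "finite S" "\<And>w n. n \<le> length w \<Longrightarrow> c w n \<in> S"
    using c unfolding definable_fun_def by blast
  have "?F w n \<in> {l. set l \<subseteq> S \<and> length l \<le> N}" if "n \<le> length w" for w n
    using S(2) that by (auto simp: length_filter_upt)
  moreover have "finite {l. set l \<subseteq> S \<and> length l \<le> N}"
    using S(1) by (rule finite_lists_length_le)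
  moreover have "definable (\<lambda>w n. ?F w n = l)" for l
  proof -
    have "definable (\<lambda>w n. (\<not> Suc N \<le> card {j. j < n \<and> U w j} \<and> map (c w) (filter (U w) [0..<n]) = l)
                          \<or> (Suc N \<le> card {j. j < n \<and> U w j} \<and> l = []))"
      using U c by (intro definable_disj definable_conj definable_neg definable_card_before_ge
          definable_map_filter_before_eq definable_const)
    then show ?thesis by (rule definable_cong) auto
  qed
  ultimately show ?thesis unfolding definable_fun_def by blast
qed

lemma count_list_map_upt: "count_list (map f [0..<n]) v = card {m. m < n \<and> f m = v}"
proof -
  have "count_list (map f [0..<n]) v = card {m. m < n \<and> v = f m}"
    by (simp add: count_list_eq_length_filter filter_map comp_def length_filter_upt)
  also have "{m. m < n \<and> v = f m} = {m. m < n \<and> f m = v}" by auto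
  finally show ?thesis .
qed

lemma count_list_replicate: "count_list (replicate k a) v = (if a = v then k else 0)"
  by (induction k) auto

definition sum_threshold :: "fparith \<Rightarrow> nat \<Rightarrow> bool" where
  "sum_threshold A \<tau> \<longleftrightarrow> (\<forall>xs ys. (\<forall>v\<in>set xs. v \<in> Fset A \<and> v \<ge> 0) \<longrightarrow> (\<forall>v\<in>set ys. v \<in> Fset A \<and> v \<ge> 0)
     \<longrightarrow> (\<forall>v. min (count_list xs v) \<tau> = min (count_list ys v) \<tau>) \<longrightarrow> fsum A xs = fsum A ys)"

lemma fixed_precisionD:
  assumes "fixed_precision A"
  shows "0 \<in> Fset A" and "1 \<in> Fset A"
    and "\<forall>xs. set xs \<subseteq> {0, 1} \<longrightarrow>
        card {j. j < length xs \<and> (if xs ! j = 1 then fdiv A 1 (fsum A xs) else 0) \<noteq> 0} \<le> Nmax A"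
    and "\<exists>\<tau>. sum_threshold A \<tau>"
  using assms unfolding fixed_precision_def sum_threshold_def by auto

lemma fsum_indicators:
  assumes "fixed_precision A" and "sum_threshold A \<tau>"
  shows "fsum A (map (\<lambda>m. if U m then 1 else 0) [0..<n]) =
         fsum A (replicate (min (card {m. m < n \<and> U m}) \<tau>) 1 @
                 replicate (min (card {m. m < n \<and> \<not> U m}) \<tau>) 0)"
    (is "fsum A ?xs = fsum A ?ys")
proof -
  have set_01: "set ?xs \<subseteq> {0, 1}" "set ?ys \<subseteq> {0, 1}" by auto
  moreover have "{0, 1} \<subseteq> Fset A" using fixed_precisionD(1,2)[OF assms(1)] by simp
  ultimately have nonneg: "\<forall>v\<in>set ?xs. v \<in> Fset A \<and> v \<ge> 0" "\<forall>v\<in>set ?ys. v \<in> Fset A \<and> v \<ge> 0"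
    by auto
  have "count_list ?xs 1 = card {m. m < n \<and> U m}"
    unfolding count_list_map_upt by (rule arg_cong[where f = card]) auto
  moreover have "count_list ?xs 0 = card {m. m < n \<and> \<not> U m}"
    unfolding count_list_map_upt by (rule arg_cong[where f = card]) auto
  moreover have "count_list ?xs v = 0" if "v \<notin> {0, 1}" for v
    using set_01(1) that by (auto simp: count_list_0_iff)
  ultimately have "min (count_list ?xs v) \<tau> = min (count_list ?ys v) \<tau>" for v
    by (cases "v \<in> {0, 1}") (auto simp: count_list_replicate)
  with nonneg assms(2) show ?thesis unfolding sum_threshold_def by blast
qed

lemma card_le_Nmax_if_weight_nonzero:
  assumes "fixed_precision A"
    and "fdiv A 1 (fsum A (map (\<lambda>m. if U m then 1 else 0) [0..<n])) \<noteq> 0"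
  shows "card {m. m < n \<and> U m} \<le> Nmax A"
proof -
  let ?xs = "map (\<lambda>m. if U m then 1 else (0::ereal)) [0..<n]"
  have ind: "(if U m then 1 else 0) = (1::ereal) \<longleftrightarrow> U m" for m by simp
  have "set ?xs \<subseteq> {0, 1}" by auto
  with fixed_precisionD(3)[OF assms(1)] have
    "card {j. j < length ?xs \<and> (if ?xs ! j = 1 then fdiv A 1 (fsum A ?xs) else 0) \<noteq> 0} \<le> Nmax A"
    by blast
  moreover have
    "{j. j < length ?xs \<and> (if ?xs ! j = 1 then fdiv A 1 (fsum A ?xs) else 0) \<noteq> 0} = {m. m < n \<and> U m}"
    using assms(2) by (auto simp: ind)
  ultimately show ?thesis by simp
qed

(* Rows beyond the width are junk; cutting them off makes a column a finite object. *)
definition column :: "nat \<Rightarrow> hmat \<Rightarrow> nat \<Rightarrow> nat \<Rightarrow> ereal" where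
  "column D H n = restrict (H n) {..<D}"

lemma dotp_cong:
  "(\<And>j. j < n \<Longrightarrow> x j = x' j) \<Longrightarrow> (\<And>j. j < n \<Longrightarrow> y j = y' j) \<Longrightarrow> dotp A n x y = dotp A n x' y'"
  unfolding dotp_def by (intro arg_cong[where f = "vsum A"] map_cong) auto

lemma dotp_column: "dotp A D x (column D H n) = dotp A D x (H n)"
  unfolding column_def by (rule dotp_cong) auto

lemma matvec_column: "matvec A D W (column D H n) = matvec A D W (H n)"
  unfolding matvec_def dotp_column ..

lemma layernorm_cong:
  assumes "\<And>j. j < D \<Longrightarrow> x j = y j"
  shows "restrict (layernorm A D x) {..<D} = restrict (layernorm A D y) {..<D}"
proof -
  have mean: "map x [0..<D] = map y [0..<D]" using assms by simp
  let ?\<mu> = "fdiv A (vsum A (map y [0..<D])) (fconst A (real D))"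
  have var: "map (\<lambda>d. fmul A (fsub A (x d) ?\<mu>) (fsub A (x d) ?\<mu>)) [0..<D]
      = map (\<lambda>d. fmul A (fsub A (y d) ?\<mu>) (fsub A (y d) ?\<mu>)) [0..<D]"
    using assms by simp
  show ?thesis unfolding layernorm_def Let_def mean var using assms by auto
qed

lemma ffn_cong: "(\<And>j. j < D \<Longrightarrow> x j = y j) \<Longrightarrow> ffn A D P x = ffn A D P y"
  unfolding ffn_def matvec_def by (simp cong: dotp_cong)

definition attn_score :: "fparith \<Rightarrow> nat \<Rightarrow> tlayer \<Rightarrow> (nat \<Rightarrow> ereal) \<Rightarrow> (nat \<Rightarrow> ereal) \<Rightarrow> ereal" where
  "attn_score A D P q u =
     fdiv A (dotp A D (matvec A D (WQ P) q) (matvec A D (WK P) u)) (fconst A (sqrt (real D)))"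

definition attn_tied :: "fparith \<Rightarrow> nat \<Rightarrow> tlayer \<Rightarrow> (nat \<Rightarrow> ereal) \<Rightarrow> (nat \<Rightarrow> ereal) set \<Rightarrow>
    (nat \<Rightarrow> ereal) \<Rightarrow> bool" where
  "attn_tied A D P q past u \<longleftrightarrow> attn_score A D P q u = Max (attn_score A D P q ` past)"

definition attn_output :: "fparith \<Rightarrow> nat \<Rightarrow> tlayer \<Rightarrow> nat \<Rightarrow> nat \<Rightarrow> (nat \<Rightarrow> ereal) list \<Rightarrow>
    nat \<Rightarrow> ereal" where
  "attn_output A D P t1 t0 us d =
     (let a = fdiv A 1 (fsum A (replicate t1 1 @ replicate t0 0))
      in if a = 0 then 0 else vsum A (map (\<lambda>u. fmul A a (matvec A D (WV P) u d)) us))"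

lemma aha_attention_eq_attn_output:
  fixes A :: fparith and P :: tlayer and H :: hmat and D n :: nat
  assumes "fixed_precision A" and "sum_threshold A \<tau>"
  defines "c \<equiv> column D H"
  defines "T \<equiv> \<lambda>m. attn_tied A D P (c n) (c ` {..<n}) (c m)"
  shows "aha_attention A D P H n d =
    attn_output A D P (min (card {m. m < n \<and> T m}) \<tau>) (min (card {m. m < n \<and> \<not> T m}) \<tau>)
      (if card {m. m < n \<and> T m} \<le> Nmax A then map c (filter T [0..<n]) else []) d"
proof -
  define a where "a = fdiv A 1 (fsum A (map (\<lambda>m. if T m then 1 else 0) [0..<n]))"
  have score: "fdiv A (dotp A D (matvec A D (WQ P) (H n)) (matvec A D (WK P) (H m)))
      (fconst A (sqrt (real D))) = attn_score A D P (c n) (c m)" for m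
    unfolding attn_score_def c_def matvec_column ..
  have "aha_attention A D P H n d =
      vsum A (map (\<lambda>m. fmul A (if T m then a else 0) (matvec A D (WV P) (c m) d))
                  (filter (\<lambda>m. (if T m then a else 0) \<noteq> 0) [0..<n]))"
    unfolding aha_attention_def Let_def score a_def T_def attn_tied_def image_image
    by (simp add: c_def matvec_column)
  also have "\<dots> = attn_output A D P (min (card {m. m < n \<and> T m}) \<tau>) (min (card {m. m < n \<and> \<not> T m}) \<tau>)
      (if card {m. m < n \<and> T m} \<le> Nmax A then map c (filter T [0..<n]) else []) d"
  proof (cases "a = 0")
    case True
    then show ?thesis
      unfolding attn_output_def Let_def fsum_indicators[OF assms(1,2), symmetric] a_def[symmetric]
      by (simp add: vsum_def)
  next
    case False
    then have "card {m. m < n \<and> T m} \<le> Nmax A"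
      unfolding a_def by (rule card_le_Nmax_if_weight_nonzero[OF assms(1)])
    moreover have "filter (\<lambda>m. (if T m then a else 0) \<noteq> 0) [0..<n] = filter T [0..<n]"
      using False by (intro filter_cong) auto
    moreover have "map (\<lambda>m. fmul A (if T m then a else 0) (matvec A D (WV P) (c m) d)) (filter T [0..<n])
        = map (\<lambda>m. fmul A a (matvec A D (WV P) (c m) d)) (filter T [0..<n])"
      by (rule map_cong) auto
    ultimately show ?thesis using False
      unfolding attn_output_def Let_def fsum_indicators[OF assms(1,2), symmetric] a_def[symmetric]
      by (simp only: if_True if_False comp_def map_map)
  qed
  finally show ?thesis .
qed

definition attn_sublayer :: "fparith \<Rightarrow> nat \<Rightarrow> tlayer \<Rightarrow> hmat \<Rightarrow> hmat" where
  "attn_sublayer A D P H = (\<lambda>n. layernorm A D (\<lambda>d. fadd A (aha_attention A D P H n d) (H n d)))"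

definition ffn_sublayer :: "fparith \<Rightarrow> nat \<Rightarrow> tlayer \<Rightarrow> hmat \<Rightarrow> hmat" where
  "ffn_sublayer A D P H = (\<lambda>n. layernorm A D (\<lambda>d. fadd A (ffn A D P (H n) d) (H n d)))"

lemma hidden_Suc:
  "hidden A T w (Suc k) =
     (if even k then attn_sublayer A (width T) (layers T (k div 2)) (hidden A T w k)
      else ffn_sublayer A (width T) (layers T (k div 2)) (hidden A T w k))"
  by (simp only: hidden.simps Let_def attn_sublayer_def ffn_sublayer_def)

lemma definable_fun_column_ffn_sublayer:
  assumes "definable_fun (\<lambda>w n. column D (H w) n)"
  shows "definable_fun (\<lambda>w n. column D (ffn_sublayer A D P (H w)) n)"
proof -
  let ?f = "\<lambda>u. restrict (layernorm A D (\<lambda>d. fadd A (ffn A D P u d) (u d))) {..<D}"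
  have "definable_fun (\<lambda>w n. ?f (column D (H w) n))" using assms by (rule definable_fun_comp)
  moreover have "?f (column D (H w) n) = column D (ffn_sublayer A D P (H w)) n" for w n
  proof -
    have "ffn A D P (column D (H w) n) = ffn A D P (H w n)"
      by (rule ffn_cong) (simp add: column_def)
    then show ?thesis
      unfolding ffn_sublayer_def column_def by (intro layernorm_cong) simp
  qed
  ultimately show ?thesis by simp
qed

definition attn_column :: "fparith \<Rightarrow> nat \<Rightarrow> tlayer \<Rightarrow> (nat \<Rightarrow> ereal) \<Rightarrow> nat \<Rightarrow> nat \<Rightarrow>
    (nat \<Rightarrow> ereal) list \<Rightarrow> nat \<Rightarrow> ereal" where
  "attn_column A D P q t1 t0 us =
     restrict (layernorm A D (\<lambda>d. fadd A (attn_output A D P t1 t0 us d) (q d))) {..<D}"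

lemma column_attn_sublayer:
  fixes A :: fparith and P :: tlayer and H :: hmat and D n :: nat
  assumes "fixed_precision A" and "sum_threshold A \<tau>"
  defines "c \<equiv> column D H"
  defines "T \<equiv> \<lambda>m. attn_tied A D P (c n) (c ` {..<n}) (c m)"
  shows "column D (attn_sublayer A D P H) n =
    attn_column A D P (c n) (min (card {m. m < n \<and> T m}) \<tau>) (min (card {m. m < n \<and> \<not> T m}) \<tau>)
      (if card {m. m < n \<and> T m} \<le> Nmax A then map c (filter T [0..<n]) else [])"
  unfolding attn_sublayer_def attn_column_def column_def
  by (intro layernorm_cong)
    (simp add: aha_attention_eq_attn_output[OF assms(1,2)] c_def T_def column_def)

lemma definable_fun_column_attn_sublayer:
  assumes fp: "fixed_precision A" and H: "definable_fun (\<lambda>w n. column D (H w) n)"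
  shows "definable_fun (\<lambda>w n. column D (attn_sublayer A D P (H w)) n)"
proof -
  obtain \<tau> where \<tau>: "sum_threshold A \<tau>" using fixed_precisionD(4)[OF fp] ..
  define c where "c w = column D (H w)" for w
  define tied where "tied z u = attn_tied A D P (fst z) (snd z) u" for z u
  define G where "G z w n = attn_column A D P (fst z)
      (min (card {m. m < n \<and> tied z (c w m)}) \<tau>) (min (card {m. m < n \<and> \<not> tied z (c w m)}) \<tau>)
      (if card {m. m < n \<and> tied z (c w m)} \<le> Nmax A
       then map (c w) (filter (\<lambda>m. tied z (c w m)) [0..<n]) else [])" for z w n
  have c: "definable_fun c" using H unfolding c_def .
  have "definable_fun (\<lambda>w n. (c w n, c w ` {..<n}))"
    by (intro definable_fun_pair c definable_fun_image_before)
  moreover have "definable_fun (G z)" for z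
  proof -
    have "definable (\<lambda>w m. tied z (c w m))" "definable (\<lambda>w m. \<not> tied z (c w m))"
      by (rule definable_of_definable_fun[OF c])+
    then have "definable_fun (\<lambda>w n. (min (card {m. m < n \<and> tied z (c w m)}) \<tau>,
        min (card {m. m < n \<and> \<not> tied z (c w m)}) \<tau>,
        if card {m. m < n \<and> tied z (c w m)} \<le> Nmax A
        then map (c w) (filter (\<lambda>m. tied z (c w m)) [0..<n]) else []))"
      by (intro definable_fun_pair definable_fun_card_before_min definable_fun_filter_before c)
    from definable_fun_comp[OF this, of "\<lambda>(t1, t0, us). attn_column A D P (fst z) t1 t0 us"]
    show ?thesis unfolding G_def by simp
  qed
  ultimately have "definable_fun (\<lambda>w n. G (c w n, c w ` {..<n}) w n)"
    by (rule definable_fun_bind)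
  moreover have "G (c w n, c w ` {..<n}) w n = column D (attn_sublayer A D P (H w)) n" for w n
    unfolding G_def tied_def c_def fst_conv snd_conv
    by (rule column_attn_sublayer[OF fp \<tau>, symmetric])
  ultimately show ?thesis by simp
qed

lemma definable_fun_column_hidden:
  fixes T :: "('a::finite) transformer"
  assumes "fixed_precision A"
  shows "definable_fun (\<lambda>w n. column (width T) (hidden A T w k) n)"
proof (induction k)
  case 0
  have "definable_fun (\<lambda>w n. restrict (emb T (wbar w ! n)) {..<width T})"
    by (rule definable_fun_comp[OF definable_fun_letter])
  then show ?case by (simp only: column_def hidden.simps)
next
  case (Suc k)
  then show ?case
    unfolding hidden_Suc
    by (cases "even k")
      (simp_all add: definable_fun_column_attn_sublayer[OF assms] definable_fun_column_ffn_sublayer)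
qed

lemma simulated_PFO2_if_definable_columns:
  "definable_fun (\<lambda>w n. column D (G w) n) \<Longrightarrow> simulated_PFO2 F D G"
  unfolding simulated_PFO2_def
proof (intro allI impI ballI)
  fix d f assume G: "definable_fun (\<lambda>w n. column D (G w) n)" and "d < D"
  have "definable (\<lambda>w n. column D (G w) n d = f)"
    using G by (rule definable_of_definable_fun)
  then have "definable (\<lambda>w n. G w n d = f)"
    by (rule definable_cong) (simp add: column_def \<open>d < D\<close>)
  then show "\<exists>\<phi>. is_pfo2 \<phi> \<and> fv \<phi> \<subseteq> {VX} \<and> (\<forall>w. \<forall>n \<le> length w. G w n d = f \<longleftrightarrow> models_at (wbar w) n \<phi>)"
    unfolding definable_def by blast
qed

lemma simulated_PFO2_scalar_if_definable_fun:
  "definable_fun G \<Longrightarrow> simulated_PFO2_scalar F (\<lambda>w. G w (length w))"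
  unfolding simulated_PFO2_scalar_def
proof (intro ballI)
  fix f assume "definable_fun G"
  then have "definable (\<lambda>w n. G w n = f)" by (rule definable_of_definable_fun)
  then show "\<exists>\<phi>. is_pfo2 \<phi> \<and> fv \<phi> \<subseteq> {VX} \<and> (\<forall>w. G w (length w) = f \<longleftrightarrow> models_at (wbar w) (length w) \<phi>)"
    unfolding definable_def by blast
qed

theorem mainTheorem15:
  fixes A :: fparith and T :: "('a::finite) transformer"
  assumes "fixed_precision A" and "wf_transformer A T"
  shows "(\<forall>k \<le> 2 * depth T. simulated_PFO2 (Fset A) (width T) (\<lambda>w. hidden A T w k))
       \<and> simulated_PFO2_scalar (Fset A) (tf_output A T :: 'a list \<Rightarrow> ereal)"
proof (intro conjI allI impI)
  fix k
  show "simulated_PFO2 (Fset A) (width T) (\<lambda>w. hidden A T w k)"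
    by (rule simulated_PFO2_if_definable_columns[OF definable_fun_column_hidden[OF assms(1)]])
next
  let ?out = "\<lambda>u. fadd A (dotp A (width T) (theta T) u) (bout T)"
  have out: "(\<lambda>w. ?out (column (width T) (hidden A T w (2 * depth T)) (length w))) = tf_output A T"
    unfolding tf_output_def dotp_column ..
  have "definable_fun (\<lambda>w n. ?out (column (width T) (hidden A T w (2 * depth T)) n))"
    by (rule definable_fun_comp[OF definable_fun_column_hidden[OF assms(1)]])
  then have "simulated_PFO2_scalar (Fset A)
      (\<lambda>w. ?out (column (width T) (hidden A T w (2 * depth T)) (length w)))"
    by (rule simulated_PFO2_scalar_if_definable_fun)
  then show "simulated_PFO2_scalar (Fset A) (tf_output A T :: 'a list \<Rightarrow> ereal)"
    unfolding out .
qed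

end
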